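(* Fix $\alpha\in(0,1)$ and any $\theta<0$. Let $t(\alpha)$ be such that the procedure $$D^B_i(\mathbf p)=\mathbb I(p_i\le\alpha)\,\mathbb I\big(\Phi^{-1}(p_1)+\Phi^{-1}(p_2)\le t(\alpha)\big),\quad i=1,2,$$ satisfies $P_{(0,0)}\big(\max(D^B_1,D^B_2)=1\big)=\alpha$. Then $D^B$ is weakly monotone and marginally nominal $\alpha$, controls the FWER in the strong sense at level $\alpha$, and $P_{(\theta,\theta)}\big(\max(D^B_1,D^B_2)=1\big)\ge P_{(\theta,\theta)}\big(\max(D_1,D_2)=1\big)$ for every procedure $D$ that controls the FWER in the strong sense at level $\alpha$ and is either marginally nominal $\alpha$ or weakly monotone. In particular, the same procedure is optimal for every $\theta<0$.
   Context: Model: $\Theta=\mathbb R^2$, $\vartheta=(\theta_1,\theta_2)$, $p_i=\Phi(\theta_i+Z_i)$ with $Z_1,Z_2$ independent standard normal and $\Phi$ the standard normal CDF; the $i$th null is true ($h_i=0$) iff $\theta_i\ge0$. A procedure is a measurable $D=(D_1,D_2):[0,1]^2\to\{0,1\}^2$ ($D_i=1$: reject the $i$th null). Strong FWER control at level $\alpha$: $P_\vartheta(\text{some true null is rejected})\le\alpha$ for all $\vartheta\in\mathbb R^2$. Marginally nominal $\alpha$: $D_i(\mathbf p)=0$ whenever $p_i>\alpha$. Weakly monotone: $D(\mathbf p)\succeq D(\mathbf q)$ (coordinatewise) whenever $\mathbf p\preceq\mathbf q$ (coordinatewise). *)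

theory Defs
  imports "HOL-Probability.Probability"
begin

definition Znorm :: "real measure" where
  "Znorm = density lborel std_normal_density"

definition Z2 :: "(real \<times> real) measure" where
  "Z2 = Znorm \<Otimes>\<^sub>M Znorm"

definition Phi :: "real \<Rightarrow> real" where
  "Phi x = measure Znorm {..x}"

definition Phi_inv :: "real \<Rightarrow> ereal" where
  "Phi_inv p = (if p \<le> 0 then -\<infinity> else if 1 \<le> p then \<infinity> else ereal (THE x. Phi x = p))"

definition pvals :: "real \<times> real \<Rightarrow> real \<times> real \<Rightarrow> real \<times> real" where
  "pvals th z = (Phi (fst th + fst z), Phi (snd th + snd z))"

definition Pr :: "real \<times> real \<Rightarrow> (real \<times> real \<Rightarrow> bool \<times> bool) \<Rightarrow> (bool \<times> bool \<Rightarrow> bool) \<Rightarrow> real" where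
  "Pr th D E = measure Z2 {z \<in> space Z2. E (D (pvals th z))}"

definition unit_sq :: "(real \<times> real) set" where
  "unit_sq = {0..1} \<times> {0..1}"

text \<open>A procedure: measurable map [0,1]^2 -> {0,1}^2 (True = reject).\<close>
definition is_procedure :: "(real \<times> real \<Rightarrow> bool \<times> bool) \<Rightarrow> bool" where
  "is_procedure D \<longleftrightarrow> D \<in> restrict_space borel unit_sq \<rightarrow>\<^sub>M count_space UNIV"

text \<open>Some true null (theta_i \<ge> 0) is rejected.\<close>
definition false_rej :: "real \<times> real \<Rightarrow> bool \<times> bool \<Rightarrow> bool" where
  "false_rej th d \<longleftrightarrow> (fst th \<ge> 0 \<and> fst d) \<or> (snd th \<ge> 0 \<and> snd d)"

definition strong_fwer :: "real \<Rightarrow> (real \<times> real \<Rightarrow> bool \<times> bool) \<Rightarrow> bool" where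
  "strong_fwer \<alpha> D \<longleftrightarrow> (\<forall>th. Pr th D (false_rej th) \<le> \<alpha>)"

definition marg_nominal :: "real \<Rightarrow> (real \<times> real \<Rightarrow> bool \<times> bool) \<Rightarrow> bool" where
  "marg_nominal \<alpha> D \<longleftrightarrow> (\<forall>p\<in>unit_sq. (fst p > \<alpha> \<longrightarrow> \<not> fst (D p)) \<and> (snd p > \<alpha> \<longrightarrow> \<not> snd (D p)))"

definition weakly_monotone :: "(real \<times> real \<Rightarrow> bool \<times> bool) \<Rightarrow> bool" where
  "weakly_monotone D \<longleftrightarrow> (\<forall>p\<in>unit_sq. \<forall>q\<in>unit_sq. fst p \<le> fst q \<and> snd p \<le> snd q \<longrightarrow>
      (fst (D q) \<longrightarrow> fst (D p)) \<and> (snd (D q) \<longrightarrow> snd (D p)))"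

definition DB :: "real \<Rightarrow> real \<Rightarrow> real \<times> real \<Rightarrow> bool \<times> bool" where
  "DB \<alpha> t p = (fst p \<le> \<alpha> \<and> Phi_inv (fst p) + Phi_inv (snd p) \<le> ereal t,
                 snd p \<le> \<alpha> \<and> Phi_inv (fst p) + Phi_inv (snd p) \<le> ereal t)"

definition any_rej :: "bool \<times> bool \<Rightarrow> bool" where
  "any_rej d \<longleftrightarrow> fst d \<or> snd d"

end

theory Submission
  imports Defs
begin

(* Write z_i = Phi_inv p_i, so that under theta the vector z is a standard normal pair shifted by
   theta, and D^B rejects exactly on M \<inter> {z1 + z2 \<le> t} with M = {Phi z1 \<le> alpha \<or> Phi z2 \<le> alpha}.
   A strongly FWER-controlling procedure that is marginally nominal or weakly monotone rejects only
   inside M: if a monotone procedure rejected H1 at some p1 > alpha, it would reject H1 on the whole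
   lower quadrant below that point, whose probability exceeds alpha under a configuration with
   theta1 = 0 and theta2 small enough.  Such a procedure also rejects at (0,0) with probability at
   most alpha, that of D^B.  The likelihood ratio of (theta,theta) against (0,0) is exp(theta (z1 + z2) - theta^2),
   decreasing in z1 + z2 when theta < 0, so the Neyman-Pearson argument inside M shows that D^B is
   most powerful.  D^B itself controls the FWER: with both nulls true monotonicity reduces to (0,0),
   with one true null marginal nominality suffices. *)

lemma prob_space_Znorm: "prob_space Znorm"
  unfolding Znorm_def by (rule prob_space_normal_density) simp

lemma sets_Znorm [measurable_cong, simp]: "sets Znorm = sets borel"
  unfolding Znorm_def by simp

lemma space_Znorm [simp]: "space Znorm = UNIV"
  unfolding Znorm_def by simp

interpretation Znorm: real_distribution Znorm
  by (simp add: real_distribution_def real_distribution_axioms_def prob_space_Znorm)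

lemma Phi_eq_cdf: "Phi = cdf Znorm"
  unfolding Phi_def[abs_def] cdf_def by simp

lemma isCont_Phi: "isCont Phi x"
proof -
  have "emeasure Znorm {x} = (\<integral>\<^sup>+ y. ennreal (std_normal_density y) * indicator {x} y \<partial>lborel)"
    unfolding Znorm_def by (rule emeasure_density) auto
  also have "\<dots> = 0"
    by (rule nn_integral_null_set) (auto simp: null_sets_def)
  finally show ?thesis
    unfolding Phi_eq_cdf using Znorm.isCont_cdf by (simp add: Znorm.emeasure_eq_measure)
qed

lemma Phi_strict_mono: "strict_mono Phi"
proof
  fix x y :: real
  assume "x < y"
  define m where "m = \<bar>x\<bar> + \<bar>y\<bar>"
  have density_lower: "std_normal_density m \<le> std_normal_density z" if "x \<le> z" "z \<le> y" for z
  proof -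
    have "\<bar>z\<bar> \<le> m" using that unfolding m_def by linarith
    then have "z\<^sup>2 \<le> m\<^sup>2" by (metis abs_ge_zero power2_abs power_mono)
    then show ?thesis unfolding std_normal_density_def by (auto intro!: divide_right_mono)
  qed
  have "ennreal (std_normal_density m * (y - x))
      = (\<integral>\<^sup>+ z. ennreal (std_normal_density m) * indicator {x<..y} z \<partial>lborel)"
    using \<open>x < y\<close> by (simp add: nn_integral_cmult_indicator ennreal_mult)
  also have "\<dots> \<le> (\<integral>\<^sup>+ z. ennreal (std_normal_density z) * indicator {x<..y} z \<partial>lborel)"
    by (intro nn_integral_mono) (auto split: split_indicator intro!: ennreal_leI density_lower)
  also have "\<dots> = emeasure Znorm {x<..y}"
    unfolding Znorm_def by (rule emeasure_density[symmetric]) auto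
  finally have "std_normal_density m * (y - x) \<le> measure Znorm {x<..y}"
    by (simp add: Znorm.emeasure_eq_measure)
  moreover have "0 < std_normal_density m * (y - x)"
    using \<open>x < y\<close> by (simp add: normal_density_pos)
  ultimately show "Phi x < Phi y"
    using Znorm.cdf_diff_eq[OF \<open>x < y\<close>] unfolding Phi_eq_cdf by simp
qed

lemma Phi_less_iff [simp]: "Phi x < Phi y \<longleftrightarrow> x < y"
  using Phi_strict_mono by (simp add: strict_mono_less)

lemma Phi_le_iff [simp]: "Phi x \<le> Phi y \<longleftrightarrow> x \<le> y"
  using Phi_strict_mono by (simp add: strict_mono_less_eq)

lemma Phi_eq_iff [simp]: "Phi x = Phi y \<longleftrightarrow> x = y"
  using Phi_strict_mono by (simp add: strict_mono_eq)

lemma Phi_pos: "0 < Phi x"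
  using Znorm.cdf_nonneg[of "x - 1"] Phi_less_iff[of "x - 1" x] unfolding Phi_eq_cdf by linarith

lemma Phi_less_1: "Phi x < 1"
  using Znorm.cdf_bounded_prob[of "x + 1"] Phi_less_iff[of x "x + 1"] unfolding Phi_eq_cdf by linarith

lemma Phi_exceeds: "p < 1 \<Longrightarrow> \<exists>x. p < Phi x"
  using order_tendstoD(1)[OF Znorm.cdf_lim_at_top_prob] unfolding Phi_eq_cdf
  by (metis eventually_at_top_linorder order_refl)

lemma Phi_surj:
  assumes "0 < p" "p < 1"
  obtains x where "Phi x = p"
proof -
  obtain a where "Phi a < p"
    using order_tendstoD(2)[OF Znorm.cdf_lim_at_bot \<open>0 < p\<close>] unfolding Phi_eq_cdf
    by (metis eventually_at_bot_linorder order_refl)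
  moreover obtain b where "p < Phi b"
    using Phi_exceeds \<open>p < 1\<close> by blast
  moreover have "a \<le> b"
    using calculation by (metis Phi_less_iff less_imp_le less_trans)
  ultimately show ?thesis
    using IVT[of Phi a p b] isCont_Phi that by (auto simp: less_imp_le)
qed

lemma Phi_inv_Phi [simp]: "Phi_inv (Phi x) = ereal x"
  using Phi_pos[of x] Phi_less_1[of x] by (simp add: Phi_inv_def)

text \<open>This Galois connection also covers the junk values \<open>\<plusminus>\<infinity>\<close> of \<open>Phi_inv\<close> outside \<open>(0,1)\<close>.\<close>
lemma Phi_inv_le_iff: "Phi_inv p \<le> ereal x \<longleftrightarrow> p \<le> Phi x"
proof (cases "0 < p \<and> p < 1")
  case True
  then obtain y where "Phi y = p" by (auto elim: Phi_surj)
  then show ?thesis by auto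
next
  case False
  then show ?thesis
    using Phi_pos[of x] Phi_less_1[of x] by (auto simp: Phi_inv_def)
qed

lemma mono_Phi_inv: "mono Phi_inv"
proof
  fix p q :: real
  assume "p \<le> q"
  show "Phi_inv p \<le> Phi_inv q"
  proof (cases "0 < q \<and> q < 1")
    case True
    then obtain y where "Phi y = q" by (auto elim: Phi_surj)
    then show ?thesis using \<open>p \<le> q\<close> by (auto simp: Phi_inv_le_iff)
  next
    case False
    then show ?thesis using \<open>p \<le> q\<close> by (auto simp: Phi_inv_def)
  qed
qed

lemma borel_measurable_Phi [measurable]: "Phi \<in> borel_measurable borel"
  by (rule borel_measurable_mono) (simp add: mono_def)

lemma borel_measurable_Phi_inv [measurable]: "Phi_inv \<in> borel_measurable borel"
proof (rule borel_measurableI_le)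
  fix y :: ereal
  show "{p \<in> space borel. Phi_inv p \<le> y} \<in> sets borel"
  proof (cases y)
    case (real x)
    then have "{p \<in> space borel. Phi_inv p \<le> y} = {..Phi x}"
      by (auto simp: Phi_inv_le_iff)
    then show ?thesis by simp
  next
    case PInf
    then show ?thesis by simp
  next
    case MInf
    then have "{p \<in> space borel. Phi_inv p \<le> y} = {..0}"
      by (auto simp: Phi_inv_def)
    then show ?thesis by simp
  qed
qed

lemma borel_measurable_fst_real_pair [measurable]: "fst \<in> borel_measurable (borel :: (real \<times> real) measure)"
  by (intro borel_measurable_continuous_onI continuous_on_fst continuous_on_id)

lemma borel_measurable_snd_real_pair [measurable]: "snd \<in> borel_measurable (borel :: (real \<times> real) measure)"
  by (intro borel_measurable_continuous_onI continuous_on_snd continuous_on_id)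

lemma sets_borel_Times [measurable]:
  "A \<in> sets borel \<Longrightarrow> B \<in> sets borel \<Longrightarrow> A \<times> B \<in> sets (borel :: (real \<times> real) measure)"
  by (metis borel_prod pair_measureI)

interpretation Znorm2: pair_prob_space Znorm Znorm
  by (simp add: pair_prob_space_def pair_sigma_finite_def prob_space_Znorm prob_space_imp_sigma_finite)

interpretation Z2: prob_space Z2
  unfolding Z2_def by (rule Znorm2.P.prob_space_axioms)

lemma sets_Z2 [measurable_cong, simp]: "sets Z2 = sets (borel :: (real \<times> real) measure)"
  unfolding Z2_def borel_prod[symmetric] by (rule sets_pair_measure_cong) simp_all

lemma space_Z2 [simp]: "space Z2 = UNIV"
  using sets_eq_imp_space_eq[OF sets_Z2] by simp

lemma measure_Z2_Times:
  "A \<in> sets borel \<Longrightarrow> B \<in> sets borel \<Longrightarrow> measure Z2 (A \<times> B) = measure Znorm A * measure Znorm B"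
  unfolding Z2_def measure_def by (simp add: Znorm.emeasure_pair_measure_Times enn2real_mult)

lemma measure_Z2_lower_quadrant: "measure Z2 ({..x} \<times> {..y}) = Phi x * Phi y"
  by (simp add: measure_Z2_Times Phi_def)

lemma Z2_density:
  "Z2 = density lborel (\<lambda>z. ennreal (std_normal_density (fst z) * std_normal_density (snd z)))"
proof -
  have "Z2 = density (lborel \<Otimes>\<^sub>M lborel)
      (\<lambda>(x, y). ennreal (std_normal_density x) * ennreal (std_normal_density y))"
    unfolding Z2_def Znorm_def
    by (rule pair_measure_density)
       (auto simp: sigma_finite_lborel intro!: prob_space_imp_sigma_finite prob_space_normal_density)
  then show ?thesis
    by (simp add: lborel_prod case_prod_unfold ennreal_mult)
qed

text \<open>The likelihood ratio of \<open>Z + (c, c)\<close> against \<open>Z\<close> for a standard normal pair \<open>Z\<close>.\<close>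
definition shift_lr :: "real \<Rightarrow> real \<times> real \<Rightarrow> real" where
  "shift_lr c z = exp (c * (fst z + snd z) - c\<^sup>2)"

lemma std_normal_density_shift:
  "std_normal_density (x - c) * std_normal_density (y - c)
   = std_normal_density x * std_normal_density y * shift_lr c (x, y)"
proof -
  have "- (x - c)\<^sup>2 / 2 + - (y - c)\<^sup>2 / 2 = - x\<^sup>2 / 2 + - y\<^sup>2 / 2 + (c * (x + y) - c\<^sup>2)"
    by (simp add: power2_eq_square field_simps)
  then have "exp (- (x - c)\<^sup>2 / 2) * exp (- (y - c)\<^sup>2 / 2)
      = exp (- x\<^sup>2 / 2) * exp (- y\<^sup>2 / 2) * exp (c * (x + y) - c\<^sup>2)"
    by (simp add: mult_exp_exp)
  then show ?thesis
    unfolding std_normal_density_def shift_lr_def by (simp add: field_simps)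
qed

lemma emeasure_Z2_shift:
  assumes [measurable]: "S \<in> sets borel"
  shows "emeasure Z2 {z. (fst z + c, snd z + c) \<in> S} = (\<integral>\<^sup>+z\<in>S. ennreal (shift_lr c z) \<partial>Z2)"
proof -
  define g where "g z = ennreal (std_normal_density (fst z) * std_normal_density (snd z))"
    for z :: "real \<times> real"
  have [measurable]: "g \<in> borel_measurable borel"
    unfolding g_def[abs_def] by measurable
  have Z2_g: "Z2 = density lborel g"
    unfolding g_def[abs_def] by (rule Z2_density)
  have "emeasure Z2 {z. (fst z + c, snd z + c) \<in> S} = (\<integral>\<^sup>+z. g z * indicator S ((c, c) + z) \<partial>lborel)"
    unfolding Z2_g
    by (subst emeasure_density) (auto intro!: nn_integral_cong split: split_indicator simp: add.commute)
  also have "\<dots> = (\<integral>\<^sup>+z. g (z - (c, c)) * indicator S z \<partial>distr lborel borel ((+) (c, c)))"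
    by (subst nn_integral_distr) auto
  also have "\<dots> = (\<integral>\<^sup>+z. g z * (ennreal (shift_lr c z) * indicator S z) \<partial>lborel)"
    by (auto simp: lborel_distr_plus g_def std_normal_density_shift ennreal_mult' mult.assoc
        intro!: nn_integral_cong)
  also have "\<dots> = (\<integral>\<^sup>+z\<in>S. ennreal (shift_lr c z) \<partial>Z2)"
    unfolding Z2_g by (rule nn_integral_density[symmetric]) (auto simp: shift_lr_def)
  finally show ?thesis .
qed

lemma nn_integral_set_le_neyman_pearson:
  fixes f :: "'a \<Rightarrow> ennreal"
  assumes "finite_measure M" and [measurable]: "B \<in> sets M" "D \<in> sets M" "f \<in> borel_measurable M"
    and "measure M D \<le> measure M B"
    and "\<And>x. x \<in> D - B \<Longrightarrow> f x \<le> k" and "\<And>x. x \<in> B - D \<Longrightarrow> k \<le> f x"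
  shows "(\<integral>\<^sup>+x\<in>D. f x \<partial>M) \<le> (\<integral>\<^sup>+x\<in>B. f x \<partial>M)"
proof -
  interpret finite_measure M by fact
  have split: "(\<integral>\<^sup>+x\<in>A. f x \<partial>M) = (\<integral>\<^sup>+x\<in>A \<inter> A'. f x \<partial>M) + (\<integral>\<^sup>+x\<in>A - A'. f x \<partial>M)"
    if [measurable]: "A \<in> sets M" "A' \<in> sets M" for A A'
    by (subst nn_integral_add[symmetric]) (auto intro!: nn_integral_cong split: split_indicator)
  have "measure M (D - B) \<le> measure M (B - D)"
    using assms(5) by (simp add: finite_measure_Diff' Int_commute)
  then have "k * emeasure M (D - B) \<le> k * emeasure M (B - D)"
    by (intro mult_left_mono) (simp_all add: emeasure_eq_measure)
  then have "(\<integral>\<^sup>+x\<in>D - B. f x \<partial>M) \<le> (\<integral>\<^sup>+x\<in>B - D. f x \<partial>M)"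
  proof (rule order_trans[rotated, OF order_trans])
    show "(\<integral>\<^sup>+x\<in>D - B. f x \<partial>M) \<le> k * emeasure M (D - B)"
      using assms(6) by (subst nn_integral_cmult_indicator[symmetric])
        (auto intro!: nn_integral_mono split: split_indicator)
    show "k * emeasure M (B - D) \<le> (\<integral>\<^sup>+x\<in>B - D. f x \<partial>M)"
      using assms(7) by (subst nn_integral_cmult_indicator[symmetric])
        (auto intro!: nn_integral_mono split: split_indicator)
  qed
  then show ?thesis
    by (simp add: split[of D B] split[of B D] Int_commute add_left_mono)
qed

lemma pvals_in_unit_sq: "pvals th z \<in> unit_sq"
  using Phi_pos Phi_less_1 by (simp add: pvals_def unit_sq_def less_imp_le)

lemma pvals_measurable: "pvals th \<in> borel \<rightarrow>\<^sub>M restrict_space borel unit_sq"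
proof (rule measurable_restrict_space2)
  show "pvals th \<in> space borel \<rightarrow> unit_sq"
    using pvals_in_unit_sq by auto
  show "pvals th \<in> borel \<rightarrow>\<^sub>M borel"
    unfolding pvals_def[abs_def] by measurable
qed

lemma procedure_event_measurable:
  assumes "is_procedure D"
  shows "{z. E (D (pvals th z))} \<in> sets borel"
proof -
  have "(\<lambda>z. E (D (pvals th z))) \<in> borel \<rightarrow>\<^sub>M count_space UNIV"
    using measurable_comp[OF pvals_measurable assms[unfolded is_procedure_def]]
    by (auto simp: comp_def intro: measurable_compose)
  from measurable_sets[OF this, of "{True}"] show ?thesis
    by (simp add: vimage_def)
qed

lemma Pr_eq_shift:
  "Pr (a, b) D E = measure Z2 {z. (fst z + a, snd z + b) \<in> {x. E (D (pvals (0, 0) x))}}"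
  by (simp add: Pr_def pvals_def add.commute)

lemma weakly_monotone_Phi:
  assumes "weakly_monotone D" "x \<le> a" "y \<le> b"
  shows "fst (D (Phi a, Phi b)) \<Longrightarrow> fst (D (Phi x, Phi y))"
    and "snd (D (Phi a, Phi b)) \<Longrightarrow> snd (D (Phi x, Phi y))"
  using assms pvals_in_unit_sq[of "(0, 0)"] unfolding weakly_monotone_def pvals_def
  by (metis Phi_le_iff fst_conv snd_conv add_0)+

lemma Pr_false_rej_le_Pr_origin:
  assumes "is_procedure D" "weakly_monotone D" "0 \<le> a" "0 \<le> b"
  shows "Pr (a, b) D (false_rej (a, b)) \<le> Pr (0, 0) D any_rej"
  unfolding Pr_def
proof (rule Z2.finite_measure_mono)
  show "{z \<in> space Z2. false_rej (a, b) (D (pvals (a, b) z))}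
      \<subseteq> {z \<in> space Z2. any_rej (D (pvals (0, 0) z))}"
  proof clarify
    fix z :: "real \<times> real"
    assume "false_rej (a, b) (D (pvals (a, b) z))"
    moreover have "fst z \<le> a + fst z" "snd z \<le> b + snd z"
      using assms(3,4) by simp_all
    note shift_down = weakly_monotone_Phi[OF \<open>weakly_monotone D\<close> this]
    ultimately show "any_rej (D (pvals (0, 0) z))"
      using shift_down by (auto simp: pvals_def false_rej_def any_rej_def)
  qed
  show "{z \<in> space Z2. any_rej (D (pvals (0, 0) z))} \<in> sets Z2"
    using procedure_event_measurable[OF \<open>is_procedure D\<close>] by simp
qed

lemma Pr_fst_le_if_marg_nominal:
  assumes "marg_nominal \<alpha> D" "0 < \<alpha>" "\<alpha> < 1" "0 \<le> a"
  shows "Pr (a, b) D fst \<le> \<alpha>"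
proof -
  obtain q where q: "Phi q = \<alpha>" using Phi_surj assms(2,3) .
  have "Pr (a, b) D fst \<le> measure Z2 ({..q} \<times> UNIV)"
    unfolding Pr_def using assms(1,4) pvals_in_unit_sq[of "(a, b)"]
    by (intro Z2.finite_measure_mono)
       (force simp: marg_nominal_def pvals_def sets_borel_Times simp flip: q)+
  also have "\<dots> = \<alpha>"
    using Znorm.prob_space by (simp add: measure_Z2_Times Phi_def[symmetric] q)
  finally show ?thesis .
qed

lemma Pr_snd_le_if_marg_nominal:
  assumes "marg_nominal \<alpha> D" "0 < \<alpha>" "\<alpha> < 1" "0 \<le> b"
  shows "Pr (a, b) D snd \<le> \<alpha>"
proof -
  obtain q where q: "Phi q = \<alpha>" using Phi_surj assms(2,3) .
  have "Pr (a, b) D snd \<le> measure Z2 (UNIV \<times> {..q})"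
    unfolding Pr_def using assms(1,4) pvals_in_unit_sq[of "(a, b)"]
    by (intro Z2.finite_measure_mono)
       (force simp: marg_nominal_def pvals_def sets_borel_Times simp flip: q)+
  also have "\<dots> = \<alpha>"
    using Znorm.prob_space by (simp add: measure_Z2_Times Phi_def[symmetric] q)
  finally show ?thesis .
qed

lemma DB_is_procedure: "is_procedure (DB \<alpha> t)"
proof -
  have "DB \<alpha> t \<in> borel \<rightarrow>\<^sub>M count_space UNIV \<Otimes>\<^sub>M count_space UNIV"
    unfolding DB_def[abs_def] by measurable
  then show ?thesis
    unfolding is_procedure_def by (intro measurable_restrict_space1) (simp add: pair_measure_countable)
qed

lemma DB_weakly_monotone: "weakly_monotone (DB \<alpha> t)"
  unfolding weakly_monotone_def
proof (intro ballI impI)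
  fix p q :: "real \<times> real"
  assume le: "fst p \<le> fst q \<and> snd p \<le> snd q"
  then have "Phi_inv (fst p) + Phi_inv (snd p) \<le> Phi_inv (fst q) + Phi_inv (snd q)"
    by (intro add_mono monoD[OF mono_Phi_inv]) auto
  with le show "(fst (DB \<alpha> t q) \<longrightarrow> fst (DB \<alpha> t p)) \<and> (snd (DB \<alpha> t q) \<longrightarrow> snd (DB \<alpha> t p))"
    by (auto simp: DB_def intro: order_trans)
qed

lemma DB_marg_nominal: "marg_nominal \<alpha> (DB \<alpha> t)"
  by (auto simp: marg_nominal_def DB_def)

lemma any_rej_DB_pvals:
  "any_rej (DB \<alpha> t (pvals (0, 0) z)) \<longleftrightarrow> (Phi (fst z) \<le> \<alpha> \<or> Phi (snd z) \<le> \<alpha>) \<and> fst z + snd z \<le> t"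
  by (auto simp: DB_def any_rej_def pvals_def)

lemma DB_strong_fwer:
  assumes "0 < \<alpha>" "\<alpha> < 1" "Pr (0, 0) (DB \<alpha> t) any_rej = \<alpha>"
  shows "strong_fwer \<alpha> (DB \<alpha> t)"
  unfolding strong_fwer_def
proof
  fix th :: "real \<times> real"
  obtain a b where th: "th = (a, b)" by (cases th)
  consider "0 \<le> a" "0 \<le> b" | "0 \<le> a" "b < 0" | "a < 0" "0 \<le> b" | "a < 0" "b < 0"
    by linarith
  then show "Pr th (DB \<alpha> t) (false_rej th) \<le> \<alpha>"
  proof cases
    case 1
    then show ?thesis
      using Pr_false_rej_le_Pr_origin[OF DB_is_procedure DB_weakly_monotone 1, of \<alpha> t] assms(3) th by simp
  next
    case 2
    then have "false_rej th = fst" by (auto simp: th false_rej_def)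
    then show ?thesis
      using Pr_fst_le_if_marg_nominal[OF DB_marg_nominal assms(1,2)] 2 th by simp
  next
    case 3
    then have "false_rej th = snd" by (auto simp: th false_rej_def)
    then show ?thesis
      using Pr_snd_le_if_marg_nominal[OF DB_marg_nominal assms(1,2)] 3 th by simp
  next
    case 4
    then show ?thesis using assms(1) by (simp add: th Pr_def false_rej_def)
  qed
qed

lemma fst_rej_le_if_weakly_monotone:
  assumes "is_procedure D" "strong_fwer \<alpha> D" "weakly_monotone D"
    and rej: "fst (D (Phi a, Phi b))"
  shows "Phi a \<le> \<alpha>"
proof (rule ccontr)
  assume "\<not> Phi a \<le> \<alpha>"
  then obtain c where c: "\<alpha> / Phi a < Phi c"
    using Phi_exceeds[of "\<alpha> / Phi a"] Phi_pos[of a] by (auto simp: divide_less_eq)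
  define th where "th = (0 :: real, b - c)"
  have "{..a} \<times> {..c} \<subseteq> {z. false_rej th (D (pvals th z))}"
  proof clarify
    fix x y
    assume "x \<le> a" "y \<le> c"
    then have "fst (D (Phi x, Phi (b - c + y)))"
      using weakly_monotone_Phi(1)[OF assms(3) _ _ rej] by simp
    then show "false_rej th (D (pvals th (x, y)))"
      by (simp add: th_def false_rej_def pvals_def)
  qed
  then have "Phi a * Phi c \<le> Pr th D (false_rej th)"
    unfolding Pr_def measure_Z2_lower_quadrant[symmetric]
    using procedure_event_measurable[OF assms(1)] by (intro Z2.finite_measure_mono) auto
  also have "\<dots> \<le> \<alpha>"
    using assms(2) unfolding strong_fwer_def by blast
  finally show False
    using c Phi_pos[of a] by (simp add: divide_less_eq mult.commute)
qed

lemma snd_rej_le_if_weakly_monotone: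
  assumes "is_procedure D" "strong_fwer \<alpha> D" "weakly_monotone D"
    and rej: "snd (D (Phi a, Phi b))"
  shows "Phi b \<le> \<alpha>"
proof (rule ccontr)
  assume "\<not> Phi b \<le> \<alpha>"
  then obtain c where c: "\<alpha> / Phi b < Phi c"
    using Phi_exceeds[of "\<alpha> / Phi b"] Phi_pos[of b] by (auto simp: divide_less_eq)
  define th where "th = (a - c, 0 :: real)"
  have "{..c} \<times> {..b} \<subseteq> {z. false_rej th (D (pvals th z))}"
  proof clarify
    fix x y
    assume "x \<le> c" "y \<le> b"
    then have "snd (D (Phi (a - c + x), Phi y))"
      using weakly_monotone_Phi(2)[OF assms(3) _ _ rej] by simp
    then show "false_rej th (D (pvals th (x, y)))"
      by (simp add: th_def false_rej_def pvals_def)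
  qed
  then have "Phi c * Phi b \<le> Pr th D (false_rej th)"
    unfolding Pr_def measure_Z2_lower_quadrant[symmetric]
    using procedure_event_measurable[OF assms(1)] by (intro Z2.finite_measure_mono) auto
  also have "\<dots> \<le> \<alpha>"
    using assms(2) unfolding strong_fwer_def by blast
  finally show False
    using c Phi_pos[of b] by (simp add: divide_less_eq)
qed

lemma any_rej_imp_Phi_le:
  assumes "is_procedure D" "strong_fwer \<alpha> D" "marg_nominal \<alpha> D \<or> weakly_monotone D"
    and rej: "any_rej (D (Phi x, Phi y))"
  shows "Phi x \<le> \<alpha> \<or> Phi y \<le> \<alpha>"
  using assms(3)
proof
  assume "marg_nominal \<alpha> D"
  then show ?thesis
    using rej pvals_in_unit_sq[of "(0, 0)" "(x, y)"]
    by (force simp: marg_nominal_def any_rej_def pvals_def)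
next
  assume "weakly_monotone D"
  then show ?thesis
    using rej fst_rej_le_if_weakly_monotone[OF assms(1,2)] snd_rej_le_if_weakly_monotone[OF assms(1,2)]
    by (auto simp: any_rej_def)
qed

lemma DB_most_powerful:
  assumes "0 < \<alpha>" "\<theta> < 0" "Pr (0, 0) (DB \<alpha> t) any_rej = \<alpha>"
    and D: "is_procedure D" "strong_fwer \<alpha> D" "marg_nominal \<alpha> D \<or> weakly_monotone D"
  shows "Pr (\<theta>, \<theta>) D any_rej \<le> Pr (\<theta>, \<theta>) (DB \<alpha> t) any_rej"
proof -
  define R where "R D' = {z. any_rej (D' (pvals (0, 0) z))}" for D'
  have R_sets [measurable]: "R D \<in> sets borel" "R (DB \<alpha> t) \<in> sets borel"
    unfolding R_def using procedure_event_measurable D(1) DB_is_procedure by blast+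
  have "false_rej (0, 0) = any_rej"
    by (auto simp: false_rej_def any_rej_def)
  moreover have "Pr (0, 0) D (false_rej (0, 0)) \<le> \<alpha>"
    using D(2) unfolding strong_fwer_def by blast
  ultimately have "measure Z2 (R D) \<le> \<alpha>"
    by (simp add: Pr_def R_def)
  also have "\<alpha> = measure Z2 (R (DB \<alpha> t))"
    using assms(3) by (simp add: Pr_def R_def)
  finally have null_le: "measure Z2 (R D) \<le> measure Z2 (R (DB \<alpha> t))" .
  have "(\<integral>\<^sup>+z\<in>R D. ennreal (shift_lr \<theta> z) \<partial>Z2) \<le> (\<integral>\<^sup>+z\<in>R (DB \<alpha> t). ennreal (shift_lr \<theta> z) \<partial>Z2)"
  proof (rule nn_integral_set_le_neyman_pearson[where k = "ennreal (exp (\<theta> * t - \<theta>\<^sup>2))"])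
    show "finite_measure Z2"
      by (rule Z2.finite_measure_axioms)
    show "(\<lambda>z. ennreal (shift_lr \<theta> z)) \<in> borel_measurable Z2"
      unfolding shift_lr_def by measurable
  next
    fix z
    assume z: "z \<in> R D - R (DB \<alpha> t)"
    then have "Phi (fst z) \<le> \<alpha> \<or> Phi (snd z) \<le> \<alpha>"
      using any_rej_imp_Phi_le[OF D] by (simp add: R_def pvals_def)
    with z have "t < fst z + snd z"
      by (auto simp: R_def any_rej_DB_pvals)
    then show "ennreal (shift_lr \<theta> z) \<le> ennreal (exp (\<theta> * t - \<theta>\<^sup>2))"
      using \<open>\<theta> < 0\<close> by (intro ennreal_leI) (simp add: shift_lr_def mult_le_cancel_left)
  next
    fix z
    assume "z \<in> R (DB \<alpha> t) - R D"
    then have "fst z + snd z \<le> t"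
      by (simp add: R_def any_rej_DB_pvals)
    then show "ennreal (exp (\<theta> * t - \<theta>\<^sup>2)) \<le> ennreal (shift_lr \<theta> z)"
      using \<open>\<theta> < 0\<close> by (intro ennreal_leI) (simp add: shift_lr_def mult_le_cancel_left)
  qed (use null_le in auto)
  then have "emeasure Z2 {z. (fst z + \<theta>, snd z + \<theta>) \<in> R D}
      \<le> emeasure Z2 {z. (fst z + \<theta>, snd z + \<theta>) \<in> R (DB \<alpha> t)}"
    by (simp only: emeasure_Z2_shift R_sets)
  then show ?thesis
    unfolding Pr_eq_shift R_def[symmetric] by (simp add: Z2.emeasure_eq_measure)
qed

theorem mainTheorem5:
  fixes \<alpha> \<theta> t :: real
  assumes "0 < \<alpha>" and "\<alpha> < 1" and "\<theta> < 0"
    and "Pr (0, 0) (DB \<alpha> t) any_rej = \<alpha>"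
  shows "is_procedure (DB \<alpha> t) \<and> weakly_monotone (DB \<alpha> t) \<and> marg_nominal \<alpha> (DB \<alpha> t)
    \<and> strong_fwer \<alpha> (DB \<alpha> t)
    \<and> (\<forall>D. is_procedure D \<and> strong_fwer \<alpha> D \<and> (marg_nominal \<alpha> D \<or> weakly_monotone D) \<longrightarrow>
          Pr (\<theta>, \<theta>) (DB \<alpha> t) any_rej \<ge> Pr (\<theta>, \<theta>) D any_rej)"
  using DB_is_procedure DB_weakly_monotone DB_marg_nominal DB_strong_fwer[OF assms(1,2,4)]
    DB_most_powerful[OF assms(1,3,4)] by blast

end
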